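(* Let $\tau$ be a subgrid tensor whose deviatoric part is $$\tau^d = \Big(2g - 3v_1\frac{\partial g}{\partial v_1} - 2v_3\frac{\partial g}{\partial v_3} - 3v_4\frac{\partial g}{\partial v_4}\Big) S + \frac{3}{|S|}\frac{\partial g}{\partial v_1}(S^2)^d + \frac{1}{|S|}\frac{\partial g}{\partial v_4}(\Omega^2)^d,$$ where $g$ is a (differentiable) scalar function of $(v_1,v_3,v_4)$, with $|S|=\sqrt{\operatorname{tr}(S^2)}$, $v_1=\operatorname{tr}(S^3)/|S|^3$, $v_3=\operatorname{tr}(\Omega^2)/|S|^2$, $v_4=\operatorname{tr}(S\Omega^2)/|S|^3$. Then $\tau$ is invariant under the symmetry groups $G_t$, $Gal$, $SO(3)$ and $G_p$, and derives from a scalar potential.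
   Context: Consider the filtered incompressible Navier–Stokes equations on $\mathbb R^3$: $\partial_t u + \nabla\cdot(u\otimes u) + \frac1\rho \nabla p - 2\nu\,\nabla\cdot S + \nabla\cdot\tau = 0$, $\nabla\cdot u=0$, where $u(t,x)\in\mathbb R^3$ is the filtered velocity, $p$ the filtered pressure, $\nu>0$ the kinematic viscosity, $\rho>0$ the density, $S=\frac12(\nabla u+\nabla u^T)$ the (filtered) strain-rate tensor, $\Omega=\frac12(\nabla u-\nabla u^T)$ the (filtered) vorticity tensor, and $\tau$ the subgrid tensor, modelled as a tensor-valued function of $(S,\Omega)$. The following groups act on $(t,x,u,p)$: time translations $G_t$: $(t,x,u,p)\mapsto(t+\epsilon,x,u,p)$; the generalized Galilean group $Gal$: $(t,x,u,p)\mapsto(t,x+\alpha(t),u+\dot\alpha(t),p-\rho\,\ddot\alpha(t)\cdot x)$, $\alpha\in C^2(\mathbb R,\mathbb R^3)$; rotations $SO(3)$: $(t,x,u,p)\mapsto(t,Rx,Ru,p)$, $R\in SO(3)$; pressure translations $G_p$: $(t,x,u,p)\mapsto(t,x,u,p+\xi(t))$, $\xi\in C^0(\mathbb R,\mathbb R)$. A model $\tau$ is called invariant under such a group $G$ if every element of $G$, acting on $(t,x,u,p)$, is a symmetry of the filtered equations with that model. For a $3\times3$ matrix $Q$, $Q^d=Q-\frac13\operatorname{tr}(Q)I$. The model $\tau$ derives from a scalar potential if there is a real function $\phi(S,\Omega)$ with $\tau^d=(\partial\phi/\partial S)^d$, where $\partial\phi/\partial S$ is the symmetric matrix $B$ such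 that $\phi(S+H,\Omega)=\phi(S,\Omega)+\operatorname{tr}(BH)+o(H)$ for symmetric $H$. *)

theory Defs
  imports "HOL-Analysis.Analysis"
begin

type_synonym vec3 = "real ^ 3"
type_synonym mat3 = "real ^ 3 ^ 3"

definition sym_mat :: "mat3 \<Rightarrow> bool" where
  "sym_mat Q \<longleftrightarrow> transpose Q = Q"

definition skew_mat :: "mat3 \<Rightarrow> bool" where
  "skew_mat Q \<longleftrightarrow> transpose Q = - Q"

definition dev :: "mat3 \<Rightarrow> mat3" where
  "dev Q = Q - (trace Q / 3) *\<^sub>R mat 1"

definition mnorm :: "mat3 \<Rightarrow> real" where
  "mnorm S = sqrt (trace (S ** S))"

definition invs :: "mat3 \<Rightarrow> mat3 \<Rightarrow> real \<times> real \<times> real" where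
  "invs S W = (trace (S ** S ** S) / mnorm S ^ 3,
               trace (W ** W) / mnorm S ^ 2,
               trace (S ** W ** W) / mnorm S ^ 3)"

text \<open>The subgrid model of the theorem.  g is the scalar function of (v1,v3,v4) and
  g' v is its (Frechet) derivative at v, so that the partial derivatives are
  dg/dv1 = g' v (1,0,0), dg/dv3 = g' v (0,1,0), dg/dv4 = g' v (0,0,1).\<close>
definition model ::
  "(real \<times> real \<times> real \<Rightarrow> real) \<Rightarrow> (real \<times> real \<times> real \<Rightarrow> real \<times> real \<times> real \<Rightarrow> real)
   \<Rightarrow> mat3 \<Rightarrow> mat3 \<Rightarrow> mat3" where
  "model g g' S W =
    (let v = invs S W; v1 = fst v; v3 = fst (snd v); v4 = snd (snd v);
         g1 = g' v (1, 0, 0); g3 = g' v (0, 1, 0); g4 = g' v (0, 0, 1)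
     in (2 * g v - 3 * v1 * g1 - 2 * v3 * g3 - 3 * v4 * g4) *\<^sub>R S
        + (3 / mnorm S * g1) *\<^sub>R dev (S ** S)
        + (1 / mnorm S * g4) *\<^sub>R dev (W ** W))"

text \<open>Velocity field u t x, pressure field p t x.  The spatial gradient matrix
  (grad u)_{ij} = d u_i / d x_j.\<close>
definition gradu :: "(real \<Rightarrow> vec3 \<Rightarrow> vec3) \<Rightarrow> real \<Rightarrow> vec3 \<Rightarrow> mat3" where
  "gradu u t x = jacobian (u t) (at x)"

definition strain :: "(real \<Rightarrow> vec3 \<Rightarrow> vec3) \<Rightarrow> real \<Rightarrow> vec3 \<Rightarrow> mat3" where
  "strain u t x = (1/2) *\<^sub>R (gradu u t x + transpose (gradu u t x))"

definition vort :: "(real \<Rightarrow> vec3 \<Rightarrow> vec3) \<Rightarrow> real \<Rightarrow> vec3 \<Rightarrow> mat3" where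
  "vort u t x = (1/2) *\<^sub>R (gradu u t x - transpose (gradu u t x))"

definition div_tensor :: "(vec3 \<Rightarrow> mat3) \<Rightarrow> vec3 \<Rightarrow> vec3" where
  "div_tensor F x = (\<chi> i. \<Sum>j\<in>UNIV. frechet_derivative F (at x) (axis j 1) $ i $ j)"

definition div_vec :: "(vec3 \<Rightarrow> vec3) \<Rightarrow> vec3 \<Rightarrow> real" where
  "div_vec f x = (\<Sum>j\<in>UNIV. frechet_derivative f (at x) (axis j 1) $ j)"

definition grad_scalar :: "(vec3 \<Rightarrow> real) \<Rightarrow> vec3 \<Rightarrow> vec3" where
  "grad_scalar f x = (\<chi> j. frechet_derivative f (at x) (axis j 1))"

definition outer :: "vec3 \<Rightarrow> vec3 \<Rightarrow> mat3" where
  "outer a b = (\<chi> i j. a $ i * b $ j)"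

text \<open>Regularity: u is jointly (Frechet) differentiable in (t,x),
  and the spatial fields S, p, u (x) u and tau(S,Omega) are differentiable in x, so that every
  term of the equations exists classically.\<close>
definition filtered_NS ::
  "real \<Rightarrow> real \<Rightarrow> (mat3 \<Rightarrow> mat3 \<Rightarrow> mat3) \<Rightarrow> (real \<Rightarrow> vec3 \<Rightarrow> vec3) \<Rightarrow> (real \<Rightarrow> vec3 \<Rightarrow> real) \<Rightarrow> bool"
  where
  "filtered_NS \<nu> \<rho> \<tau> u p \<longleftrightarrow>
    (\<forall>t x.
       (\<lambda>z. u (fst z) (snd z)) differentiable (at (t, x)) \<and>
       (\<lambda>y. strain u t y) differentiable (at x) \<and>
       (\<lambda>y. p t y) differentiable (at x) \<and>
       (\<lambda>y. \<tau> (strain u t y) (vort u t y)) differentiable (at x) \<and>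
       vector_derivative (\<lambda>s. u s x) (at t)
         + div_tensor (\<lambda>y. outer (u t y) (u t y)) x
         + (1 / \<rho>) *\<^sub>R grad_scalar (p t) x
         - (2 * \<nu>) *\<^sub>R div_tensor (\<lambda>y. strain u t y) x
         + div_tensor (\<lambda>y. \<tau> (strain u t y) (vort u t y)) x = 0 \<and>
       div_vec (u t) x = 0)"

text \<open>Time translations: the image of the solution under (t,x,u,p) -> (t+eps,x,u,p).\<close>
definition invariant_Gt :: "real \<Rightarrow> real \<Rightarrow> (mat3 \<Rightarrow> mat3 \<Rightarrow> mat3) \<Rightarrow> bool" where
  "invariant_Gt \<nu> \<rho> \<tau> \<longleftrightarrow>
    (\<forall>\<epsilon> u p. filtered_NS \<nu> \<rho> \<tau> u p \<longrightarrow>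
       filtered_NS \<nu> \<rho> \<tau> (\<lambda>t x. u (t - \<epsilon>) x) (\<lambda>t x. p (t - \<epsilon>) x))"

text \<open>Generalized Galilean transformations, alpha in C^2 with derivatives alpha1, alpha2.
  Image of the solution under (t,x,u,p) -> (t, x + alpha t, u + alpha' t, p - rho alpha'' t . x).\<close>
definition C2_curve :: "(real \<Rightarrow> vec3) \<Rightarrow> (real \<Rightarrow> vec3) \<Rightarrow> (real \<Rightarrow> vec3) \<Rightarrow> bool" where
  "C2_curve \<alpha> \<alpha>1 \<alpha>2 \<longleftrightarrow>
    (\<forall>t. (\<alpha> has_vector_derivative \<alpha>1 t) (at t)) \<and>
    (\<forall>t. (\<alpha>1 has_vector_derivative \<alpha>2 t) (at t)) \<and> continuous_on UNIV \<alpha>2"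

definition invariant_Gal :: "real \<Rightarrow> real \<Rightarrow> (mat3 \<Rightarrow> mat3 \<Rightarrow> mat3) \<Rightarrow> bool" where
  "invariant_Gal \<nu> \<rho> \<tau> \<longleftrightarrow>
    (\<forall>\<alpha> \<alpha>1 \<alpha>2 u p. C2_curve \<alpha> \<alpha>1 \<alpha>2 \<longrightarrow> filtered_NS \<nu> \<rho> \<tau> u p \<longrightarrow>
       filtered_NS \<nu> \<rho> \<tau>
         (\<lambda>t y. u t (y - \<alpha> t) + \<alpha>1 t)
         (\<lambda>t y. p t (y - \<alpha> t) - \<rho> * (\<alpha>2 t \<bullet> (y - \<alpha> t))))"

definition SO3 :: "mat3 set" where
  "SO3 = {R. transpose R ** R = mat 1 \<and> det R = 1}"

definition invariant_SO3 :: "real \<Rightarrow> real \<Rightarrow> (mat3 \<Rightarrow> mat3 \<Rightarrow> mat3) \<Rightarrow> bool" where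
  "invariant_SO3 \<nu> \<rho> \<tau> \<longleftrightarrow>
    (\<forall>R \<in> SO3. \<forall>u p. filtered_NS \<nu> \<rho> \<tau> u p \<longrightarrow>
       filtered_NS \<nu> \<rho> \<tau>
         (\<lambda>t y. R *v u t (transpose R *v y))
         (\<lambda>t y. p t (transpose R *v y)))"

definition invariant_Gp :: "real \<Rightarrow> real \<Rightarrow> (mat3 \<Rightarrow> mat3 \<Rightarrow> mat3) \<Rightarrow> bool" where
  "invariant_Gp \<nu> \<rho> \<tau> \<longleftrightarrow>
    (\<forall>\<xi> u p. continuous_on UNIV (\<xi> :: real \<Rightarrow> real) \<longrightarrow> filtered_NS \<nu> \<rho> \<tau> u p \<longrightarrow>
       filtered_NS \<nu> \<rho> \<tau> u (\<lambda>t y. p t y + \<xi> t))"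

definition is_dphi_dS :: "(mat3 \<Rightarrow> mat3 \<Rightarrow> real) \<Rightarrow> mat3 \<Rightarrow> mat3 \<Rightarrow> mat3 \<Rightarrow> bool" where
  "is_dphi_dS \<phi> S W B \<longleftrightarrow> sym_mat B \<and>
     ((\<lambda>H. (\<phi> (S + H) W - \<phi> S W - trace (B ** H)) / norm H) \<longlongrightarrow> 0)
        (at 0 within {H. sym_mat H})"

text \<open>Derivation from a scalar potential, at all admissible (filtered) arguments:
  S symmetric, traceless (incompressibility) and nonzero (the model is singular at S = 0),
  Omega antisymmetric.\<close>
definition derives_from_potential :: "(mat3 \<Rightarrow> mat3 \<Rightarrow> mat3) \<Rightarrow> bool" where
  "derives_from_potential \<tau> \<longleftrightarrow>
    (\<exists>\<phi>. \<forall>S W. sym_mat S \<longrightarrow> trace S = 0 \<longrightarrow> S \<noteq> 0 \<longrightarrow> skew_mat W \<longrightarrow>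
       (\<exists>B. is_dphi_dS \<phi> S W B \<and> dev (\<tau> S W) = dev B))"

end

theory Submission
  imports Defs
begin

text \<open>
  Time translations, pressure translations and generalized Galilean transformations are symmetries
  for every subgrid model. Under \<open>x \<mapsto> x + \<alpha>(t)\<close> the tensors \<open>S\<close> and \<open>\<Omega>\<close> are merely
  translated, and the three extra terms produced by the transformation cancel: the time derivative
  contributes \<open>-(\<nabla>u) \<alpha>' + \<alpha>''\<close>, the convection term contributes \<open>(\<nabla>u) \<alpha>'\<close> because
  \<open>div u = 0\<close>, and the pressure term contributes \<open>-\<alpha>''\<close>.

  A rotation \<open>R\<close> multiplies every term of the momentum equation by \<open>R\<close> as soon as the model is
  isotropic, \<open>\<tau>(R S R\<^sup>T, R \<Omega> R\<^sup>T) = R \<tau>(S, \<Omega>) R\<^sup>T\<close>; the model is, being built from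
  matrix products and traces of \<open>S\<close> and \<open>\<Omega>\<close>.

  The potential is \<open>\<phi> = |S|\<^sup>2 g(v\<^sub>1, v\<^sub>3, v\<^sub>4)\<close>. The invariants are homogeneous of
  degree 0 in \<open>S\<close>, and differentiating \<open>\<phi>\<close> gives
  \<open>(2g - 3v\<^sub>1g\<^sub>1 - 2v\<^sub>3g\<^sub>3 - 3v\<^sub>4g\<^sub>4) S + (3g\<^sub>1/|S|) S\<^sup>2 + (g\<^sub>4/|S|) \<Omega>\<^sup>2\<close>,
  with \<open>g\<^sub>i = \<partial>g/\<partial>v\<^sub>i\<close>, whose deviatoric part is \<open>\<tau>\<^sup>d\<close>.
\<close>

section \<open>Matrix algebra\<close>

lemma bounded_bilinear_matrix_mult:
  "bounded_bilinear ((**) :: real^'n^'m \<Rightarrow> real^'p^'n \<Rightarrow> real^'p^'m)"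
proof -
  have "bilinear ((**) :: real^'n^'m \<Rightarrow> real^'p^'n \<Rightarrow> real^'p^'m)"
    unfolding bilinear_def
    by (intro allI conjI linearI)
      (simp_all add: matrix_add_ldistrib matrix_scalar_ac scalar_matrix_assoc,
       simp add: matrix_matrix_mult_def vec_eq_iff sum.distrib distrib_right)
  then show ?thesis
    using bilinear_conv_bounded_bilinear by blast
qed

lemmas matrix_add_rdistrib = bounded_bilinear.add_left[OF bounded_bilinear_matrix_mult]
lemmas matrix_diff_ldistrib = bounded_bilinear.diff_right[OF bounded_bilinear_matrix_mult]
lemmas matrix_diff_rdistrib = bounded_bilinear.diff_left[OF bounded_bilinear_matrix_mult]
lemmas matrix_scaleR_left = bounded_bilinear.scaleR_left[OF bounded_bilinear_matrix_mult]
lemmas matrix_scaleR_right = bounded_bilinear.scaleR_right[OF bounded_bilinear_matrix_mult]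

lemma trace_scaleR: "trace (c *\<^sub>R A) = c * trace (A :: real^'n^'n)"
  by (simp add: trace_def sum_distrib_left)

lemma bounded_linear_trace: "bounded_linear (trace :: real^'n^'n \<Rightarrow> real)"
  unfolding linear_conv_bounded_linear[symmetric]
  by (rule linearI) (simp_all add: trace_add trace_scaleR)

lemma transpose_add: "transpose (A + B) = transpose A + transpose (B :: real^'n^'m)"
  by (simp add: transpose_def vec_eq_iff)

lemma transpose_conj:
  "transpose (R ** A ** transpose R) = R ** transpose A ** transpose (R :: real^'n^'m)"
  by (simp add: matrix_transpose_mul matrix_mul_assoc)

lemma matrix_conj:
  assumes "linear (D :: real^'n \<Rightarrow> real^'m)"
  shows "matrix (\<lambda>h. R *v D (C *v h)) = R ** matrix D ** C"
proof -
  have "(\<lambda>h. R *v D (C *v h)) = (\<lambda>h. (R ** matrix D ** C) *v h)"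
    using matrix_vector_mul(2)[OF assms] by (metis matrix_vector_mul_assoc)
  then show ?thesis
    by simp
qed

context
  fixes R :: "real^'n^'n"
  assumes R: "orthogonal_matrix R"
begin

lemma orthogonal_conj_mult:
  "(R ** A ** transpose R) ** (R ** B ** transpose R) = R ** (A ** B) ** transpose R"
proof -
  have "(R ** A ** transpose R) ** (R ** B ** transpose R)
      = R ** A ** (transpose R ** R) ** B ** transpose R"
    by (simp only: matrix_mul_assoc)
  also have "transpose R ** R = mat 1"
    using R orthogonal_matrix_def by blast
  finally show ?thesis
    by (simp only: matrix_mul_assoc matrix_mul_rid)
qed

lemma trace_orthogonal_conj: "trace (R ** A ** transpose R) = trace A"
proof -
  have "trace (R ** A ** transpose R) = trace (transpose R ** R ** A)"
    by (simp only: trace_mul_sym[of "R ** A"] matrix_mul_assoc)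
  also have "transpose R ** R = mat 1"
    using R orthogonal_matrix_def by blast
  finally show ?thesis
    by simp
qed

end

lemma linear_vec_expansion:
  assumes "linear (D :: real^'n \<Rightarrow> 'b::real_vector)"
  shows "D a = (\<Sum>j\<in>UNIV. a $ j *\<^sub>R D (axis j 1))"
proof -
  have "D a = D (\<Sum>j\<in>UNIV. a $ j *\<^sub>R axis j 1)"
    using basis_expansion[of a] by (simp add: scalar_mult_eq_scaleR)
  then show ?thesis
    by (simp add: linear_sum[OF assms] linear_cmul[OF assms])
qed

lemma inner_matrix_vector_mult: "(A *v b) \<bullet> a = b \<bullet> (transpose A *v (a :: real^'m))"
  by (metis dot_lmul_matrix inner_commute transpose_matrix_vector)

section \<open>Differential operators through derivatives\<close>

lemma gradu_eq_matrix:
  assumes "(u t has_derivative D) (at x)"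
  shows "gradu u t x = matrix D"
  by (simp add: gradu_def jacobian_def frechet_derivative_at[OF assms, symmetric])

lemma div_vec_eq_trace:
  assumes "(f has_derivative f') (at x)"
  shows "div_vec f x = trace (matrix f')"
  by (simp add: div_vec_def trace_def matrix_def frechet_derivative_at[OF assms, symmetric])

lemma div_tensor_eq:
  assumes "(F has_derivative F') (at x)"
  shows "div_tensor F x = (\<chi> i. \<Sum>j\<in>UNIV. F' (axis j 1) $ i $ j)"
  by (simp add: div_tensor_def frechet_derivative_at[OF assms, symmetric])

lemma div_tensor_inner:
  assumes "(F has_derivative F') (at x)"
  shows "div_tensor F x \<bullet> a = trace (matrix (\<lambda>h. transpose (F' h) *v a))"
  unfolding div_tensor_eq[OF assms]
  by (simp add: inner_vec_def trace_def matrix_def matrix_vector_mult_def transpose_def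
      sum_distrib_right) (rule sum.swap)

lemma grad_scalar_inner:
  assumes "(P has_derivative P') (at x)"
  shows "grad_scalar P x \<bullet> a = P' a"
proof -
  have "grad_scalar P x = (\<chi> j. P' (axis j 1))"
    by (simp add: grad_scalar_def frechet_derivative_at[OF assms, symmetric])
  then show ?thesis
    by (simp add: inner_vec_def linear_vec_expansion[OF has_derivative_linear[OF assms], of a]
        mult.commute)
qed

lemma has_derivative_partial_snd:
  assumes "((\<lambda>z. w (fst z) (snd z)) has_derivative D) (at (t, x))"
  shows "(w t has_derivative (\<lambda>h. D (0, h))) (at x)"
proof -
  have "((\<lambda>y. (t, y)) has_derivative (\<lambda>h. (0, h))) (at x)"
    by (auto intro!: derivative_eq_intros)
  from has_derivative_compose[OF this assms] show ?thesis
    by simp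
qed

lemma vector_derivative_partial_fst:
  assumes "((\<lambda>z. w (fst z) (snd z)) has_derivative D) (at (t, x))"
  shows "vector_derivative (\<lambda>s. w s x) (at t) = D (1, 0)"
proof -
  have "((\<lambda>s. (s, x)) has_derivative (\<lambda>h. h *\<^sub>R (1, 0))) (at t)"
    by (auto intro!: derivative_eq_intros)
  from has_derivative_compose[OF this assms]
  have "((\<lambda>s. w s x) has_vector_derivative D (1, 0)) (at t)"
    unfolding has_vector_derivative_def fst_conv snd_conv
      linear_cmul[OF has_derivative_linear[OF assms]] .
  then show ?thesis
    by (rule vector_derivative_at)
qed

lemma has_derivative_shift:
  assumes "(f has_derivative f') (at (x - c))"
  shows "((\<lambda>y. f (y - c)) has_derivative f') (at x)"
proof -
  have "((\<lambda>y. y - c) has_derivative (\<lambda>h. h)) (at x)"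
    by (auto intro!: derivative_eq_intros)
  from has_derivative_compose[OF this assms] show ?thesis .
qed

lemma differentiable_shift: "f differentiable (at (x - c)) \<Longrightarrow> (\<lambda>y. f (y - c)) differentiable (at x)"
  unfolding differentiable_def using has_derivative_shift by blast

lemma bounded_bilinear_outer: "bounded_bilinear outer"
  by (auto simp: bilinear_conv_bounded_bilinear[symmetric] bilinear_def outer_def vec_eq_iff
      algebra_simps intro!: linearI)

lemma div_tensor_outer:
  assumes "(f has_derivative f') (at x)"
  shows "div_tensor (\<lambda>y. outer (f y) (f y)) x = div_vec f x *\<^sub>R f x + f' (f x)"
proof -
  from bounded_bilinear.FDERIV[OF bounded_bilinear_outer assms assms]
  have "((\<lambda>y. outer (f y) (f y)) has_derivative
      (\<lambda>h. outer (f x) (f' h) + outer (f' h) (f x))) (at x)" .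
  moreover have "f' (f x) $ i = (\<Sum>j\<in>UNIV. f x $ j * f' (axis j 1) $ i)" for i
    using linear_vec_expansion[OF has_derivative_linear[OF assms], of "f x"]
    by (simp add: sum_component)
  ultimately show ?thesis
    by (simp add: div_tensor_eq div_vec_eq_trace[OF assms] trace_def matrix_def outer_def vec_eq_iff
        sum.distrib sum_distrib_left algebra_simps)
qed

section \<open>Solutions of the filtered equations\<close>

definition NS_momentum ::
  "real \<Rightarrow> real \<Rightarrow> (mat3 \<Rightarrow> mat3 \<Rightarrow> mat3) \<Rightarrow> (real \<Rightarrow> vec3 \<Rightarrow> vec3) \<Rightarrow> (real \<Rightarrow> vec3 \<Rightarrow> real)
   \<Rightarrow> real \<Rightarrow> vec3 \<Rightarrow> vec3" where
  "NS_momentum \<nu> \<rho> \<tau> u p t x =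
     vector_derivative (\<lambda>s. u s x) (at t)
     + div_tensor (\<lambda>y. outer (u t y) (u t y)) x
     + (1 / \<rho>) *\<^sub>R grad_scalar (p t) x
     - (2 * \<nu>) *\<^sub>R div_tensor (\<lambda>y. strain u t y) x
     + div_tensor (\<lambda>y. \<tau> (strain u t y) (vort u t y)) x"

lemma filtered_NS_iff:
  "filtered_NS \<nu> \<rho> \<tau> u p \<longleftrightarrow>
    (\<forall>t x. (\<lambda>z. u (fst z) (snd z)) differentiable (at (t, x)) \<and>
       (\<lambda>y. strain u t y) differentiable (at x) \<and>
       (\<lambda>y. p t y) differentiable (at x) \<and>
       (\<lambda>y. \<tau> (strain u t y) (vort u t y)) differentiable (at x) \<and>
       NS_momentum \<nu> \<rho> \<tau> u p t x = 0 \<and> div_vec (u t) x = 0)"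
  unfolding filtered_NS_def NS_momentum_def ..

lemma filtered_NS_pointwise:
  assumes "filtered_NS \<nu> \<rho> \<tau> u p"
  shows "(\<lambda>z. u (fst z) (snd z)) differentiable (at (t, x))"
    and "strain u t differentiable (at x)"
    and "p t differentiable (at x)"
    and "(\<lambda>y. \<tau> (strain u t y) (vort u t y)) differentiable (at x)"
    and "NS_momentum \<nu> \<rho> \<tau> u p t x = 0"
    and "div_vec (u t) x = 0"
  using assms unfolding filtered_NS_iff by simp_all

lemma filtered_NS_has_derivative:
  assumes "filtered_NS \<nu> \<rho> \<tau> u p"
  obtains D where "((\<lambda>z. u (fst z) (snd z)) has_derivative D) (at (t, x))"
  using filtered_NS_pointwise(1)[OF assms] unfolding differentiable_def by blast

lemma filtered_NS_differentiable_velocity: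
  assumes "filtered_NS \<nu> \<rho> \<tau> u p"
  shows "u t differentiable (at x)"
proof -
  obtain D where "((\<lambda>z. u (fst z) (snd z)) has_derivative D) (at (t, x))"
    using filtered_NS_has_derivative[OF assms] .
  from has_derivative_partial_snd[OF this] show ?thesis
    by (rule differentiableI)
qed

lemma invariant_Gt: "invariant_Gt \<nu> \<rho> \<tau>"
  unfolding invariant_Gt_def
proof (intro allI impI)
  fix \<epsilon> u p
  assume "filtered_NS \<nu> \<rho> \<tau> u p"
  note ns = this[unfolded filtered_NS_iff, rule_format]
  show "filtered_NS \<nu> \<rho> \<tau> (\<lambda>t. u (t - \<epsilon>)) (\<lambda>t. p (t - \<epsilon>))"
    unfolding filtered_NS_iff
  proof (intro allI)
    fix t x
    obtain D where D: "((\<lambda>z. u (fst z) (snd z)) has_derivative D) (at (t - \<epsilon>, x))"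
      using ns[of "t - \<epsilon>" x] unfolding differentiable_def by blast
    have "((\<lambda>z. u (fst z) (snd z)) has_derivative D) (at ((t, x) - (\<epsilon>, 0)))"
      using D by (simp only: diff_Pair diff_zero)
    from has_derivative_shift[OF this]
    have D_shift: "((\<lambda>z. u (fst z - \<epsilon>) (snd z)) has_derivative D) (at (t, x))"
      by (simp only: fst_diff snd_diff fst_conv snd_conv diff_zero)
    have strain: "strain (\<lambda>t. u (t - \<epsilon>)) t = strain u (t - \<epsilon>)"
      and vort: "vort (\<lambda>t. u (t - \<epsilon>)) t = vort u (t - \<epsilon>)"
      by (intro ext, simp only: strain_def vort_def gradu_def)+
    have "vector_derivative (\<lambda>s. u (s - \<epsilon>) x) (at t) = vector_derivative (\<lambda>s. u s x) (at (t - \<epsilon>))"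
      using vector_derivative_partial_fst[OF D] vector_derivative_partial_fst[OF D_shift] by simp
    then have "NS_momentum \<nu> \<rho> \<tau> (\<lambda>t. u (t - \<epsilon>)) (\<lambda>t. p (t - \<epsilon>)) t x = NS_momentum \<nu> \<rho> \<tau> u p (t - \<epsilon>) x"
      unfolding NS_momentum_def strain vort by simp
    then show "(\<lambda>z. u (fst z - \<epsilon>) (snd z)) differentiable (at (t, x)) \<and>
       (\<lambda>y. strain (\<lambda>t. u (t - \<epsilon>)) t y) differentiable (at x) \<and>
       (\<lambda>y. p (t - \<epsilon>) y) differentiable (at x) \<and>
       (\<lambda>y. \<tau> (strain (\<lambda>t. u (t - \<epsilon>)) t y) (vort (\<lambda>t. u (t - \<epsilon>)) t y)) differentiable (at x) \<and>
       NS_momentum \<nu> \<rho> \<tau> (\<lambda>t. u (t - \<epsilon>)) (\<lambda>t. p (t - \<epsilon>)) t x = 0 \<and> div_vec (u (t - \<epsilon>)) x = 0"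
      using ns[of "t - \<epsilon>" x] differentiableI[OF D_shift] unfolding strain vort by simp
  qed
qed

lemma invariant_Gp: "invariant_Gp \<nu> \<rho> \<tau>"
  unfolding invariant_Gp_def
proof (intro allI impI)
  fix \<xi> :: "real \<Rightarrow> real" and u p
  assume "filtered_NS \<nu> \<rho> \<tau> u p"
  note ns = this[unfolded filtered_NS_iff, rule_format]
  show "filtered_NS \<nu> \<rho> \<tau> u (\<lambda>t y. p t y + \<xi> t)"
    unfolding filtered_NS_iff
  proof (intro allI)
    fix t x
    obtain P where P: "(p t has_derivative P) (at x)"
      using ns[of t x] unfolding differentiable_def by blast
    then have P_const: "((\<lambda>y. p t y + \<xi> t) has_derivative P) (at x)"
      by (rule has_derivative_add_const)
    have "grad_scalar (\<lambda>y. p t y + \<xi> t) x = grad_scalar (p t) x"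
      by (rule vector_eq_rdot[THEN iffD1])
        (simp add: grad_scalar_inner[OF P] grad_scalar_inner[OF P_const])
    then have "NS_momentum \<nu> \<rho> \<tau> u (\<lambda>t y. p t y + \<xi> t) t x = NS_momentum \<nu> \<rho> \<tau> u p t x"
      unfolding NS_momentum_def by simp
    then show "(\<lambda>z. u (fst z) (snd z)) differentiable (at (t, x)) \<and>
       (\<lambda>y. strain u t y) differentiable (at x) \<and>
       (\<lambda>y. p t y + \<xi> t) differentiable (at x) \<and>
       (\<lambda>y. \<tau> (strain u t y) (vort u t y)) differentiable (at x) \<and>
       NS_momentum \<nu> \<rho> \<tau> u (\<lambda>t y. p t y + \<xi> t) t x = 0 \<and> div_vec (u t) x = 0"
      using ns[of t x] differentiableI[OF P_const] by simp
  qed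
qed

section \<open>Galilean transformations\<close>

lemma div_tensor_shift:
  assumes "F differentiable (at (x - c))"
  shows "div_tensor (\<lambda>y. F (y - c)) x = div_tensor F (x - c)"
proof -
  obtain F' where F': "(F has_derivative F') (at (x - c))"
    using assms unfolding differentiable_def by blast
  show ?thesis
    unfolding div_tensor_eq[OF F'] div_tensor_eq[OF has_derivative_shift[OF F']] ..
qed

lemma div_vec_galilean:
  assumes "f differentiable (at (x - c))"
  shows "div_vec (\<lambda>y. f (y - c) + a) x = div_vec f (x - c)"
proof -
  obtain f' where f': "(f has_derivative f') (at (x - c))"
    using assms unfolding differentiable_def by blast
  show ?thesis
    unfolding div_vec_eq_trace[OF f']
      div_vec_eq_trace[OF has_derivative_add_const[OF has_derivative_shift[OF f']]] ..
qed

lemma has_derivative_galilean_pressure: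
  assumes "(f has_derivative F) (at (x - c))"
  shows "((\<lambda>y. f (y - c) - r * (b \<bullet> (y - c))) has_derivative (\<lambda>h. F h - r * (b \<bullet> h))) (at x)"
proof -
  have "((\<lambda>w. f w - r * (b \<bullet> w)) has_derivative (\<lambda>h. F h - r * (b \<bullet> h))) (at (x - c))"
    using has_derivative_diff[OF assms bounded_linear_imp_has_derivative[OF
        bounded_linear_const_mult[OF bounded_linear_inner_right]]] .
  from has_derivative_shift[OF this] show ?thesis .
qed

lemma grad_scalar_galilean:
  assumes "(f has_derivative F) (at (x - c))"
  shows "grad_scalar (\<lambda>y. f (y - c) - r * (b \<bullet> (y - c))) x = grad_scalar f (x - c) - r *\<^sub>R b"
  by (rule vector_eq_rdot[THEN iffD1])
    (simp add: grad_scalar_inner[OF has_derivative_galilean_pressure[OF assms]]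
      grad_scalar_inner[OF assms] inner_diff_left)

lemma has_derivative_joint_galilean:
  assumes D: "((\<lambda>z. w (fst z) (snd z)) has_derivative D) (at (t, x - \<alpha> t))"
    and \<alpha>: "(\<alpha> has_vector_derivative \<beta> t) (at t)"
    and \<beta>: "(\<beta> has_vector_derivative \<gamma> t) (at t)"
  shows "((\<lambda>z. w (fst z) (snd z - \<alpha> (fst z)) + \<beta> (fst z)) has_derivative
           (\<lambda>h. D (fst h, snd h - fst h *\<^sub>R \<beta> t) + fst h *\<^sub>R \<gamma> t)) (at (t, x))"
proof -
  have fst: "((\<lambda>z. fst z) has_derivative (\<lambda>h. fst h)) (at (t, x))"
    by (rule bounded_linear_imp_has_derivative[OF bounded_linear_fst])
  have "((\<lambda>z. \<alpha> (fst z)) has_derivative (\<lambda>h. fst h *\<^sub>R \<beta> t)) (at (t, x))"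
    using has_derivative_compose[OF fst, of \<alpha>] \<alpha> by (simp add: has_vector_derivative_def)
  then have shift: "((\<lambda>z. (fst z, snd z - \<alpha> (fst z))) has_derivative
      (\<lambda>h. (fst h, snd h - fst h *\<^sub>R \<beta> t))) (at (t, x))"
    by (intro has_derivative_Pair has_derivative_diff fst bounded_linear_imp_has_derivative
        bounded_linear_snd)
  have D': "((\<lambda>z. w (fst z) (snd z)) has_derivative D)
      (at ((\<lambda>z. (fst z, snd z - \<alpha> (fst z))) (t, x)))"
    using D by simp
  have \<beta>': "((\<lambda>z. \<beta> (fst z)) has_derivative (\<lambda>h. fst h *\<^sub>R \<gamma> t)) (at (t, x))"
    using has_derivative_compose[OF fst, of \<beta>] \<beta> by (simp add: has_vector_derivative_def)
  from has_derivative_add[OF has_derivative_compose[OF shift D'] \<beta>'] show ?thesis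
    by simp
qed

lemma strain_vort_galilean:
  assumes "\<And>y. u t differentiable (at y)"
  shows "strain (\<lambda>t y. u t (y - \<alpha> t) + \<alpha>1 t) t = (\<lambda>y. strain u t (y - \<alpha> t))"
    and "vort (\<lambda>t y. u t (y - \<alpha> t) + \<alpha>1 t) t = (\<lambda>y. vort u t (y - \<alpha> t))"
proof -
  have gradu: "gradu (\<lambda>t y. u t (y - \<alpha> t) + \<alpha>1 t) t y = gradu u t (y - \<alpha> t)" for y
  proof -
    obtain D where D: "(u t has_derivative D) (at (y - \<alpha> t))"
      using assms unfolding differentiable_def by blast
    show ?thesis
      using gradu_eq_matrix[of u t D, OF D] gradu_eq_matrix[of "\<lambda>t y. u t (y - \<alpha> t) + \<alpha>1 t" t D y]
        has_derivative_add_const[OF has_derivative_shift[OF D]] by simp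
  qed
  show "strain (\<lambda>t y. u t (y - \<alpha> t) + \<alpha>1 t) t = (\<lambda>y. strain u t (y - \<alpha> t))"
    and "vort (\<lambda>t y. u t (y - \<alpha> t) + \<alpha>1 t) t = (\<lambda>y. vort u t (y - \<alpha> t))"
    by (rule ext, simp only: strain_def vort_def gradu)+
qed

lemma NS_momentum_galilean:
  assumes ns: "filtered_NS \<nu> \<rho> \<tau> u p" and C: "C2_curve \<alpha> \<alpha>1 \<alpha>2" and "\<rho> \<noteq> 0"
  shows "NS_momentum \<nu> \<rho> \<tau> (\<lambda>t y. u t (y - \<alpha> t) + \<alpha>1 t)
           (\<lambda>t y. p t (y - \<alpha> t) - \<rho> * (\<alpha>2 t \<bullet> (y - \<alpha> t))) t x
       = NS_momentum \<nu> \<rho> \<tau> u p t (x - \<alpha> t)"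
proof -
  define z where "z = x - \<alpha> t"
  obtain D where D: "((\<lambda>z. u (fst z) (snd z)) has_derivative D) (at (t, z))"
    using filtered_NS_has_derivative[OF ns] .
  have \<alpha>: "(\<alpha> has_vector_derivative \<alpha>1 t) (at t)" and \<alpha>1: "(\<alpha>1 has_vector_derivative \<alpha>2 t) (at t)"
    using C by (simp_all add: C2_curve_def)
  define Du where "Du = (\<lambda>h. D (0, h))"
  have Du: "(u t has_derivative Du) (at z)"
    unfolding Du_def by (rule has_derivative_partial_snd[OF D])
  have Dv: "((\<lambda>y. u t (y - \<alpha> t) + \<alpha>1 t) has_derivative Du) (at x)"
    using has_derivative_add_const[OF has_derivative_shift[OF Du[unfolded z_def]]] .
  have "vector_derivative (\<lambda>s. u s (x - \<alpha> s) + \<alpha>1 s) (at t) = D (1, - \<alpha>1 t) + \<alpha>2 t"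
    using vector_derivative_partial_fst[OF has_derivative_joint_galilean[where w = u and \<alpha> = \<alpha>
        and \<beta> = \<alpha>1 and \<gamma> = \<alpha>2, OF D[unfolded z_def] \<alpha> \<alpha>1]]
    by simp
  also have "D (1, - \<alpha>1 t) = D (1, 0) - Du (\<alpha>1 t)"
    using linear_diff[OF has_derivative_linear[OF D], of "(1, 0)" "(0, \<alpha>1 t)"] by (simp add: Du_def)
  finally have time: "vector_derivative (\<lambda>s. u s (x - \<alpha> s) + \<alpha>1 s) (at t)
      = vector_derivative (\<lambda>s. u s z) (at t) - Du (\<alpha>1 t) + \<alpha>2 t"
    using vector_derivative_partial_fst[OF D] by simp
  have "div_vec (\<lambda>y. u t (y - \<alpha> t) + \<alpha>1 t) x = 0"
    using div_vec_eq_trace[OF Dv] div_vec_eq_trace[OF Du] filtered_NS_pointwise(6)[OF ns] by simp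
  then have convection: "div_tensor (\<lambda>y. outer (u t (y - \<alpha> t) + \<alpha>1 t) (u t (y - \<alpha> t) + \<alpha>1 t)) x
      = div_tensor (\<lambda>y. outer (u t y) (u t y)) z + Du (\<alpha>1 t)"
    using div_tensor_outer[OF Dv] div_tensor_outer[OF Du] filtered_NS_pointwise(6)[OF ns]
      linear_add[OF has_derivative_linear[OF Du]] by (simp add: z_def)
  obtain P where "(p t has_derivative P) (at (x - \<alpha> t))"
    using filtered_NS_pointwise(3)[OF ns] unfolding differentiable_def by blast
  note pressure = grad_scalar_galilean[OF this, of \<rho> "\<alpha>2 t"]
  show ?thesis
    unfolding NS_momentum_def strain_vort_galilean[OF filtered_NS_differentiable_velocity[OF ns]]
      time convection pressure div_tensor_shift[OF filtered_NS_pointwise(2)[OF ns]]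
      div_tensor_shift[OF filtered_NS_pointwise(4)[OF ns]]
    using \<open>\<rho> \<noteq> 0\<close> by (simp add: z_def algebra_simps)
qed

lemma invariant_Gal:
  assumes "\<rho> \<noteq> 0"
  shows "invariant_Gal \<nu> \<rho> \<tau>"
  unfolding invariant_Gal_def
proof (intro allI impI)
  fix \<alpha> \<alpha>1 \<alpha>2 u p
  assume C: "C2_curve \<alpha> \<alpha>1 \<alpha>2" and ns: "filtered_NS \<nu> \<rho> \<tau> u p"
  show "filtered_NS \<nu> \<rho> \<tau> (\<lambda>t y. u t (y - \<alpha> t) + \<alpha>1 t)
          (\<lambda>t y. p t (y - \<alpha> t) - \<rho> * (\<alpha>2 t \<bullet> (y - \<alpha> t)))"
    unfolding filtered_NS_iff
  proof (intro allI)
    fix t x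
    obtain D where D: "((\<lambda>z. u (fst z) (snd z)) has_derivative D) (at (t, x - \<alpha> t))"
      using filtered_NS_has_derivative[OF ns] .
    have "(\<alpha> has_vector_derivative \<alpha>1 t) (at t)" and "(\<alpha>1 has_vector_derivative \<alpha>2 t) (at t)"
      using C by (simp_all add: C2_curve_def)
    from has_derivative_joint_galilean[where w = u and \<alpha> = \<alpha> and \<beta> = \<alpha>1 and \<gamma> = \<alpha>2, OF D this]
    have joint: "(\<lambda>z. u (fst z) (snd z - \<alpha> (fst z)) + \<alpha>1 (fst z)) differentiable (at (t, x))"
      by (rule differentiableI)
    obtain P where "(p t has_derivative P) (at (x - \<alpha> t))"
      using filtered_NS_pointwise(3)[OF ns] unfolding differentiable_def by blast
    from has_derivative_galilean_pressure[OF this, of \<rho> "\<alpha>2 t"]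
    have pressure: "(\<lambda>y. p t (y - \<alpha> t) - \<rho> * (\<alpha>2 t \<bullet> (y - \<alpha> t))) differentiable (at x)"
      by (rule differentiableI)
    show "(\<lambda>z. u (fst z) (snd z - \<alpha> (fst z)) + \<alpha>1 (fst z)) differentiable (at (t, x)) \<and>
       strain (\<lambda>t y. u t (y - \<alpha> t) + \<alpha>1 t) t differentiable (at x) \<and>
       (\<lambda>y. p t (y - \<alpha> t) - \<rho> * (\<alpha>2 t \<bullet> (y - \<alpha> t))) differentiable (at x) \<and>
       (\<lambda>y. \<tau> (strain (\<lambda>t y. u t (y - \<alpha> t) + \<alpha>1 t) t y) (vort (\<lambda>t y. u t (y - \<alpha> t) + \<alpha>1 t) t y))
         differentiable (at x) \<and>
       NS_momentum \<nu> \<rho> \<tau> (\<lambda>t y. u t (y - \<alpha> t) + \<alpha>1 t)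
         (\<lambda>t y. p t (y - \<alpha> t) - \<rho> * (\<alpha>2 t \<bullet> (y - \<alpha> t))) t x = 0 \<and>
       div_vec (\<lambda>y. u t (y - \<alpha> t) + \<alpha>1 t) x = 0"
      unfolding strain_vort_galilean[OF filtered_NS_differentiable_velocity[OF ns]]
        NS_momentum_galilean[OF ns C assms]
        div_vec_galilean[OF filtered_NS_differentiable_velocity[OF ns]]
      using joint pressure differentiable_shift[OF filtered_NS_pointwise(2)[OF ns]]
        differentiable_shift[OF filtered_NS_pointwise(4)[OF ns]]
        filtered_NS_pointwise(5,6)[OF ns]
      by simp
  qed
qed

section \<open>Rotations\<close>

lemma has_derivative_compose_matrix_vector:
  fixes A :: "real^'n^'m"
  assumes "(f has_derivative f') (at (A *v x))"
  shows "((\<lambda>y. f (A *v y)) has_derivative (\<lambda>h. f' (A *v h))) (at x)"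
proof -
  have "((\<lambda>y. A *v y) has_derivative (\<lambda>h. A *v h)) (at x)"
    by (rule bounded_linear_imp_has_derivative[OF matrix_vector_mul_bounded_linear])
  from has_derivative_compose[OF this assms] show ?thesis .
qed

lemma has_derivative_joint_rotation:
  fixes R :: "real^'n^'n"
  assumes "((\<lambda>z. w (fst z) (snd z)) has_derivative D) (at (t, transpose R *v x))"
  shows "((\<lambda>z. R *v w (fst z) (transpose R *v snd z)) has_derivative
           (\<lambda>h. R *v D (fst h, transpose R *v snd h))) (at (t, x))"
proof -
  have "((\<lambda>z. (fst z, transpose R *v snd z)) has_derivative
      (\<lambda>h. (fst h, transpose R *v snd h))) (at (t, x))"
    by (intro has_derivative_Pair bounded_linear_imp_has_derivative bounded_linear_fst
        bounded_linear_compose[OF matrix_vector_mul_bounded_linear bounded_linear_snd])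
  moreover have "((\<lambda>z. w (fst z) (snd z)) has_derivative D)
      (at ((\<lambda>z. (fst z, transpose R *v snd z)) (t, x)))"
    using assms by simp
  ultimately have "((\<lambda>z. w (fst z) (transpose R *v snd z)) has_derivative
      (\<lambda>h. D (fst h, transpose R *v snd h))) (at (t, x))"
    using has_derivative_compose by fastforce
  from bounded_linear.has_derivative[OF matrix_vector_mul_bounded_linear this] show ?thesis .
qed

lemma has_derivative_rotation:
  fixes R :: "real^'n^'n"
  assumes "(f has_derivative f') (at (transpose R *v x))"
  shows "((\<lambda>y. R *v f (transpose R *v y)) has_derivative (\<lambda>h. R *v f' (transpose R *v h))) (at x)"
proof -
  have "((\<lambda>y. f (transpose R *v y)) has_derivative (\<lambda>h. f' (transpose R *v h))) (at x)"
    by (rule has_derivative_compose_matrix_vector[OF assms])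
  from bounded_linear.has_derivative[OF matrix_vector_mul_bounded_linear this] show ?thesis .
qed

lemma has_derivative_tensor_rotation:
  fixes R :: "real^'n^'n" and F :: "real^'n \<Rightarrow> real^'n^'n"
  assumes "(F has_derivative F') (at (transpose R *v x))"
  shows "((\<lambda>y. R ** F (transpose R *v y) ** transpose R) has_derivative
           (\<lambda>h. R ** F' (transpose R *v h) ** transpose R)) (at x)"
proof -
  have "bounded_linear (\<lambda>M::real^'n^'n. R ** M ** transpose R)"
    using bounded_bilinear.bounded_linear_left[OF bounded_bilinear_matrix_mult]
      bounded_bilinear.bounded_linear_right[OF bounded_bilinear_matrix_mult]
    by (rule bounded_linear_compose)
  moreover have "((\<lambda>y. F (transpose R *v y)) has_derivative (\<lambda>h. F' (transpose R *v h))) (at x)"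
    by (rule has_derivative_compose_matrix_vector[OF assms])
  ultimately show ?thesis
    by (rule bounded_linear.has_derivative)
qed

lemma grad_scalar_rotation:
  fixes R :: mat3
  assumes "P differentiable (at (transpose R *v x))"
  shows "grad_scalar (\<lambda>y. P (transpose R *v y)) x = R *v grad_scalar P (transpose R *v x)"
proof -
  obtain P' where P: "(P has_derivative P') (at (transpose R *v x))"
    using assms unfolding differentiable_def by blast
  have Q: "((\<lambda>y. P (transpose R *v y)) has_derivative (\<lambda>h. P' (transpose R *v h))) (at x)"
    by (rule has_derivative_compose_matrix_vector[OF P])
  show ?thesis
    by (rule vector_eq_rdot[THEN iffD1], rule allI)
      (simp only: grad_scalar_inner[OF P] grad_scalar_inner[OF Q] inner_matrix_vector_mult)
qed

context
  fixes R :: mat3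
  assumes R: "orthogonal_matrix R"
begin

lemma div_vec_rotation:
  assumes "f differentiable (at (transpose R *v x))"
  shows "div_vec (\<lambda>y. R *v f (transpose R *v y)) x = div_vec f (transpose R *v x)"
proof -
  obtain f' where f': "(f has_derivative f') (at (transpose R *v x))"
    using assms unfolding differentiable_def by blast
  show ?thesis
    unfolding div_vec_eq_trace[OF has_derivative_rotation[OF f']] div_vec_eq_trace[OF f']
      matrix_conj[OF has_derivative_linear[OF f']] trace_orthogonal_conj[OF R] ..
qed

lemma div_tensor_rotation:
  assumes "F differentiable (at (transpose R *v x))"
  shows "div_tensor (\<lambda>y. R ** F (transpose R *v y) ** transpose R) x
    = R *v div_tensor F (transpose R *v x)"
proof (rule vector_eq_rdot[THEN iffD1], rule allI)
  fix a
  obtain F' where F': "(F has_derivative F') (at (transpose R *v x))"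
    using assms unfolding differentiable_def by blast
  have lin: "linear (\<lambda>h. transpose (F' h) *v (transpose R *v a))"
    using has_derivative_linear[OF F']
    by (simp add: linear_iff vector_matrix_mult_add_rdistrib vector_scaleR_matrix_ac)
  have "div_tensor (\<lambda>y. R ** F (transpose R *v y) ** transpose R) x \<bullet> a
      = trace (matrix (\<lambda>h. R *v (transpose (F' (transpose R *v h)) *v (transpose R *v a))))"
    unfolding div_tensor_inner[OF has_derivative_tensor_rotation[OF F']] transpose_conj
    by (simp only: matrix_vector_mul_assoc matrix_mul_assoc)
  also have "\<dots> = div_tensor F (transpose R *v x) \<bullet> (transpose R *v a)"
    unfolding matrix_conj[OF lin] trace_orthogonal_conj[OF R] div_tensor_inner[OF F'] ..
  finally show "div_tensor (\<lambda>y. R ** F (transpose R *v y) ** transpose R) x \<bullet> a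
      = (R *v div_tensor F (transpose R *v x)) \<bullet> a"
    by (simp add: inner_matrix_vector_mult)
qed

end

lemma differentiable_tensor_rotation:
  fixes R :: "real^'n^'n" and F :: "real^'n \<Rightarrow> real^'n^'n"
  shows "F differentiable (at (transpose R *v x)) \<Longrightarrow>
    (\<lambda>y. R ** F (transpose R *v y) ** transpose R) differentiable (at x)"
  unfolding differentiable_def using has_derivative_tensor_rotation by blast

lemma outer_matrix_vector_mult: "outer (R *v a) (R *v a) = R ** outer a a ** transpose R"
  by (simp add: outer_def matrix_matrix_mult_def matrix_vector_mult_def transpose_def vec_eq_iff
      sum_distrib_left sum_distrib_right mult_ac)

definition isotropic :: "(mat3 \<Rightarrow> mat3 \<Rightarrow> mat3) \<Rightarrow> bool" where
  "isotropic \<tau> \<longleftrightarrow> (\<forall>R S W. orthogonal_matrix R \<longrightarrow>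
     \<tau> (R ** S ** transpose R) (R ** W ** transpose R) = R ** \<tau> S W ** transpose R)"

lemma isotropicD:
  "isotropic \<tau> \<Longrightarrow> orthogonal_matrix R \<Longrightarrow>
    \<tau> (R ** S ** transpose R) (R ** W ** transpose R) = R ** \<tau> S W ** transpose R"
  unfolding isotropic_def by blast

lemma strain_vort_rotation:
  fixes R :: mat3
  assumes "\<And>y. u t differentiable (at y)"
  shows "strain (\<lambda>t y. R *v u t (transpose R *v y)) t
      = (\<lambda>y. R ** strain u t (transpose R *v y) ** transpose R)"
    and "vort (\<lambda>t y. R *v u t (transpose R *v y)) t
      = (\<lambda>y. R ** vort u t (transpose R *v y) ** transpose R)"
proof -
  have gradu: "gradu (\<lambda>t y. R *v u t (transpose R *v y)) t y
      = R ** gradu u t (transpose R *v y) ** transpose R" for y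
  proof -
    obtain D where D: "(u t has_derivative D) (at (transpose R *v y))"
      using assms unfolding differentiable_def by blast
    have "gradu (\<lambda>t y. R *v u t (transpose R *v y)) t y = matrix (\<lambda>h. R *v D (transpose R *v h))"
      by (rule gradu_eq_matrix[of "\<lambda>t y. R *v u t (transpose R *v y)",
            OF has_derivative_rotation[OF D]])
    also have "\<dots> = R ** matrix D ** transpose R"
      by (rule matrix_conj[OF has_derivative_linear[OF D]])
    also have "matrix D = gradu u t (transpose R *v y)"
      by (rule gradu_eq_matrix[of u t D, OF D, symmetric])
    finally show ?thesis .
  qed
  show "strain (\<lambda>t y. R *v u t (transpose R *v y)) t
      = (\<lambda>y. R ** strain u t (transpose R *v y) ** transpose R)"
    and "vort (\<lambda>t y. R *v u t (transpose R *v y)) t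
      = (\<lambda>y. R ** vort u t (transpose R *v y) ** transpose R)"
    by (rule ext, simp only: strain_def vort_def gradu transpose_conj matrix_add_ldistrib
        matrix_add_rdistrib matrix_diff_ldistrib matrix_diff_rdistrib matrix_scaleR_left
        matrix_scaleR_right)+
qed

lemma NS_momentum_rotation:
  assumes ns: "filtered_NS \<nu> \<rho> \<tau> u p" and iso: "isotropic \<tau>" and R: "orthogonal_matrix R"
  shows "NS_momentum \<nu> \<rho> \<tau> (\<lambda>t y. R *v u t (transpose R *v y)) (\<lambda>t y. p t (transpose R *v y)) t x
       = R *v NS_momentum \<nu> \<rho> \<tau> u p t (transpose R *v x)"
proof -
  obtain D where D: "((\<lambda>z. u (fst z) (snd z)) has_derivative D) (at (t, transpose R *v x))"
    using filtered_NS_has_derivative[OF ns] .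
  have time: "vector_derivative (\<lambda>s. R *v u s (transpose R *v x)) (at t)
      = R *v vector_derivative (\<lambda>s. u s (transpose R *v x)) (at t)"
    using vector_derivative_partial_fst[OF has_derivative_joint_rotation[where w = u, OF D]]
      vector_derivative_partial_fst[OF D] by simp
  note Du = has_derivative_partial_snd[OF D]
  have "(\<lambda>y. outer (u t y) (u t y)) differentiable (at (transpose R *v x))"
    using bounded_bilinear.FDERIV[OF bounded_bilinear_outer Du Du] by (rule differentiableI)
  from div_tensor_rotation[OF R this]
  have convection:
    "div_tensor (\<lambda>y. outer (R *v u t (transpose R *v y)) (R *v u t (transpose R *v y))) x
      = R *v div_tensor (\<lambda>y. outer (u t y) (u t y)) (transpose R *v x)"
    by (simp only: outer_matrix_vector_mult)
  show ?thesis
    unfolding NS_momentum_def strain_vort_rotation[OF filtered_NS_differentiable_velocity[OF ns]] time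
      convection isotropicD[OF iso R] grad_scalar_rotation[OF filtered_NS_pointwise(3)[OF ns]]
      div_tensor_rotation[OF R filtered_NS_pointwise(2)[OF ns]]
      div_tensor_rotation[OF R filtered_NS_pointwise(4)[OF ns]]
    by (simp only: matrix_vector_right_distrib matrix_vector_mult_diff_distrib matrix_vector_mult_scaleR)
qed

lemma invariant_SO3_if_isotropic:
  assumes "isotropic \<tau>"
  shows "invariant_SO3 \<nu> \<rho> \<tau>"
  unfolding invariant_SO3_def
proof (intro ballI allI impI)
  fix R u p
  assume "R \<in> SO3" and ns: "filtered_NS \<nu> \<rho> \<tau> u p"
  then have R: "orthogonal_matrix R"
    by (simp add: SO3_def orthogonal_matrix)
  show "filtered_NS \<nu> \<rho> \<tau> (\<lambda>t y. R *v u t (transpose R *v y)) (\<lambda>t y. p t (transpose R *v y))"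
    unfolding filtered_NS_iff
  proof (intro allI)
    fix t x
    obtain D where "((\<lambda>z. u (fst z) (snd z)) has_derivative D) (at (t, transpose R *v x))"
      using filtered_NS_has_derivative[OF ns] .
    from has_derivative_joint_rotation[where w = u, OF this]
    have joint: "(\<lambda>z. R *v u (fst z) (transpose R *v snd z)) differentiable (at (t, x))"
      by (rule differentiableI)
    obtain P where "(p t has_derivative P) (at (transpose R *v x))"
      using filtered_NS_pointwise(3)[OF ns] unfolding differentiable_def by blast
    from has_derivative_compose_matrix_vector[OF this]
    have pressure: "(\<lambda>y. p t (transpose R *v y)) differentiable (at x)"
      by (rule differentiableI)
    show "(\<lambda>z. R *v u (fst z) (transpose R *v snd z)) differentiable (at (t, x)) \<and>
       strain (\<lambda>t y. R *v u t (transpose R *v y)) t differentiable (at x) \<and>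
       (\<lambda>y. p t (transpose R *v y)) differentiable (at x) \<and>
       (\<lambda>y. \<tau> (strain (\<lambda>t y. R *v u t (transpose R *v y)) t y)
          (vort (\<lambda>t y. R *v u t (transpose R *v y)) t y)) differentiable (at x) \<and>
       NS_momentum \<nu> \<rho> \<tau> (\<lambda>t y. R *v u t (transpose R *v y)) (\<lambda>t y. p t (transpose R *v y)) t x = 0 \<and>
       div_vec (\<lambda>y. R *v u t (transpose R *v y)) x = 0"
      unfolding strain_vort_rotation[OF filtered_NS_differentiable_velocity[OF ns]]
        isotropicD[OF assms R] NS_momentum_rotation[OF ns assms R]
        div_vec_rotation[OF R filtered_NS_differentiable_velocity[OF ns]]
      using joint pressure differentiable_tensor_rotation[OF filtered_NS_pointwise(2)[OF ns]]
        differentiable_tensor_rotation[OF filtered_NS_pointwise(4)[OF ns]]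
        filtered_NS_pointwise(5,6)[OF ns]
      by simp
  qed
qed

section \<open>Isotropy of the model\<close>

lemma dev_add: "dev (A + B) = dev A + dev B"
  by (simp add: dev_def trace_add scaleR_add_left add_divide_distrib)

lemma dev_scaleR: "dev (c *\<^sub>R A) = c *\<^sub>R dev A"
  by (simp add: dev_def trace_scaleR scaleR_diff_right)

lemma dev_dev: "dev (dev A) = dev A"
proof -
  have "trace (dev A) = 0"
    by (simp add: dev_def trace_sub trace_scaleR trace_I)
  then show ?thesis
    by (simp add: dev_def[of "dev A"])
qed

lemma dev_orthogonal_conj:
  assumes R: "orthogonal_matrix R"
  shows "dev (R ** A ** transpose R) = R ** dev A ** transpose R"
proof -
  have "R ** mat 1 ** transpose R = mat 1"
    using R by (simp add: orthogonal_matrix_def)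
  then show ?thesis
    unfolding dev_def trace_orthogonal_conj[OF R] matrix_diff_ldistrib matrix_diff_rdistrib
      matrix_scaleR_left matrix_scaleR_right by simp
qed

lemma model_isotropic: "isotropic (model g g')"
  unfolding isotropic_def
proof (intro allI impI)
  fix R S W :: mat3
  assume R: "orthogonal_matrix R"
  note conj = orthogonal_conj_mult[OF R] trace_orthogonal_conj[OF R]
  have mnorm: "mnorm (R ** S ** transpose R) = mnorm S"
    unfolding mnorm_def conj ..
  have invs: "invs (R ** S ** transpose R) (R ** W ** transpose R) = invs S W"
    unfolding invs_def mnorm conj ..
  show "model g g' (R ** S ** transpose R) (R ** W ** transpose R) = R ** model g g' S W ** transpose R"
    unfolding model_def Let_def invs mnorm orthogonal_conj_mult[OF R] dev_orthogonal_conj[OF R]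
    by (simp only: matrix_add_ldistrib matrix_add_rdistrib matrix_scaleR_left matrix_scaleR_right)
qed

section \<open>The scalar potential\<close>

definition model_potential :: "(real \<times> real \<times> real \<Rightarrow> real) \<Rightarrow> mat3 \<Rightarrow> mat3 \<Rightarrow> real" where
  "model_potential g S W = trace (S ** S) * g (invs S W)"

definition potential_gradient ::
  "(real \<times> real \<times> real \<Rightarrow> real) \<Rightarrow> (real \<times> real \<times> real \<Rightarrow> real \<times> real \<times> real \<Rightarrow> real)
   \<Rightarrow> mat3 \<Rightarrow> mat3 \<Rightarrow> mat3" where
  "potential_gradient g g' S W =
    (let v = invs S W; v1 = fst v; v3 = fst (snd v); v4 = snd (snd v);
         g1 = g' v (1, 0, 0); g3 = g' v (0, 1, 0); g4 = g' v (0, 0, 1)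
     in (2 * g v - 3 * v1 * g1 - 2 * v3 * g3 - 3 * v4 * g4) *\<^sub>R S
        + (3 / mnorm S * g1) *\<^sub>R (S ** S)
        + (1 / mnorm S * g4) *\<^sub>R (W ** W))"

lemma dev_model: "dev (model g g' S W) = dev (potential_gradient g g' S W)"
  unfolding model_def potential_gradient_def Let_def dev_add dev_scaleR dev_dev ..

lemma sym_potential_gradient:
  assumes "sym_mat S" and "skew_mat W"
  shows "sym_mat (potential_gradient g g' S W)"
  using assms bounded_bilinear.minus_left[OF bounded_bilinear_matrix_mult, of W "- W"]
    bounded_bilinear.minus_right[OF bounded_bilinear_matrix_mult, of W W]
  unfolding sym_mat_def skew_mat_def potential_gradient_def Let_def
  by (simp add: transpose_add transpose_scalar matrix_transpose_mul)

lemma trace_transpose_mult_self: "trace (transpose A ** A) = norm A ^ 2" for A :: "real^'n^'m"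
  using sum.swap[of "\<lambda>i k. A $ k $ i * A $ k $ i" UNIV UNIV]
  by (simp add: power2_norm_eq_inner inner_vec_def trace_def matrix_matrix_mult_def transpose_def)

lemma trace_square_pos:
  assumes "sym_mat S" and "S \<noteq> 0"
  shows "trace (S ** S) > 0"
  using assms trace_transpose_mult_self[of S] by (simp add: sym_mat_def)

lemma has_derivative_trace_square:
  "((\<lambda>X. trace (X ** X)) has_derivative (\<lambda>H. 2 * trace (S ** H))) (at (S :: real^'n^'n))"
proof -
  have "((\<lambda>X. trace (X ** X)) has_derivative (\<lambda>H. trace (S ** H + H ** S))) (at S)"
    using bounded_linear.has_derivative[OF bounded_linear_trace
        bounded_bilinear.FDERIV[OF bounded_bilinear_matrix_mult has_derivative_ident
          has_derivative_ident]] .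
  moreover have "trace (H ** S) = trace (S ** H)" for H
    by (rule trace_mul_sym)
  ultimately show ?thesis
    by (simp add: trace_add)
qed

lemma has_derivative_trace_cube:
  "((\<lambda>X. trace (X ** X ** X)) has_derivative (\<lambda>H. 3 * trace (S ** S ** H))) (at (S :: real^'n^'n))"
proof -
  have "((\<lambda>X. X ** X) has_derivative (\<lambda>H. S ** H + H ** S)) (at S)"
    using bounded_bilinear.FDERIV[OF bounded_bilinear_matrix_mult has_derivative_ident
        has_derivative_ident] .
  from bounded_linear.has_derivative[OF bounded_linear_trace
      bounded_bilinear.FDERIV[OF bounded_bilinear_matrix_mult this has_derivative_ident]]
  have "((\<lambda>X. trace (X ** X ** X)) has_derivative
      (\<lambda>H. trace (S ** S ** H + (S ** H + H ** S) ** S))) (at S)" .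
  moreover have "trace (S ** H ** S) = trace (S ** S ** H)"
    and "trace (H ** S ** S) = trace (S ** S ** H)" for H
    using trace_mul_sym[of "S ** H" S] trace_mul_sym[of H "S ** S"] by (simp_all add: matrix_mul_assoc)
  ultimately show ?thesis
    by (simp add: trace_add matrix_add_rdistrib)
qed

lemma has_derivative_trace_mult:
  "((\<lambda>X. trace (X ** C)) has_derivative (\<lambda>H. trace (C ** H))) (at (S :: real^'n^'n))"
proof -
  have "bounded_linear (\<lambda>X. trace (X ** C))"
    by (rule bounded_linear_compose[OF bounded_linear_trace
          bounded_bilinear.bounded_linear_left[OF bounded_bilinear_matrix_mult]])
  from bounded_linear_imp_has_derivative[OF this] show ?thesis
    by (simp add: trace_mul_sym[of _ C])
qed

lemma has_derivative_mnorm: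
  assumes "trace (S ** S) > 0"
  shows "(mnorm has_derivative (\<lambda>H. trace (S ** H) / mnorm S)) (at S)"
proof -
  have "((\<lambda>X. sqrt (trace (X ** X))) has_derivative
      (\<lambda>H. 2 * trace (S ** H) * (inverse (sqrt (trace (S ** S))) / 2))) (at S)"
    using DERIV_compose_FDERIV[where g = "\<lambda>X. trace (X ** X)", OF DERIV_real_sqrt[OF assms]
      has_derivative_trace_square] .
  then show ?thesis
    unfolding mnorm_def[abs_def] by (rule has_derivative_eq_rhs) (simp add: fun_eq_iff field_simps)
qed

lemma has_derivative_divide_power:
  fixes f g :: "'a::real_normed_vector \<Rightarrow> real"
  assumes "(f has_derivative f') (at x)" and "(g has_derivative g') (at x)" and "g x \<noteq> 0"
  shows "((\<lambda>y. f y / g y ^ k) has_derivative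
           (\<lambda>h. f' h / g x ^ k - real k * (f x / g x ^ k) * (g' h / g x))) (at x)"
proof -
  have "((\<lambda>y. f y / g y ^ k) has_derivative
      (\<lambda>h. (f' h * g x ^ k - f x * (real k * g' h * g x ^ (k - 1))) / (g x ^ k * g x ^ k))) (at x)"
    by (rule has_derivative_divide'[OF assms(1) has_derivative_power[OF assms(2)]]) (simp add: assms(3))
  moreover have "(f' h * g x ^ k - f x * (real k * g' h * g x ^ (k - 1))) / (g x ^ k * g x ^ k)
      = f' h / g x ^ k - real k * (f x / g x ^ k) * (g' h / g x)" for h
    using assms(3) by (cases k) (simp_all add: field_simps)
  ultimately show ?thesis
    by (rule has_derivative_eq_rhs[OF _ ext])
qed

lemma linear_triple_expansion:
  assumes "linear (L :: real \<times> real \<times> real \<Rightarrow> real)"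
  shows "L x = fst x * L (1, 0, 0) + fst (snd x) * L (0, 1, 0) + snd (snd x) * L (0, 0, 1)"
proof -
  have "x = fst x *\<^sub>R (1, 0, 0) + fst (snd x) *\<^sub>R (0, 1, 0)
      + snd (snd x) *\<^sub>R ((0::real), (0::real), (1::real))"
    by (simp add: prod_eq_iff)
  then have "L x = L (fst x *\<^sub>R (1, 0, 0) + fst (snd x) *\<^sub>R (0, 1, 0) + snd (snd x) *\<^sub>R (0, 0, 1))"
    by (rule arg_cong)
  then show ?thesis
    by (simp only: linear_add[OF assms] linear_cmul[OF assms] real_scaleR_def)
qed

lemma has_derivative_invs:
  assumes pos: "trace (S ** S) > 0" and v: "invs S W = (v1, v3, v4)"
  shows "((\<lambda>X. invs X W) has_derivative
           (\<lambda>H. (3 * trace (S ** S ** H) / mnorm S ^ 3 - 3 * v1 * (trace (S ** H) / mnorm S ^ 2),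
                 - 2 * v3 * (trace (S ** H) / mnorm S ^ 2),
                 trace (W ** W ** H) / mnorm S ^ 3 - 3 * v4 * (trace (S ** H) / mnorm S ^ 2)))) (at S)"
proof -
  have "mnorm S \<noteq> 0"
    using pos by (simp add: mnorm_def)
  note quotient = has_derivative_divide_power[OF _ has_derivative_mnorm[OF pos] this]
  have v1: "trace (S ** S ** S) / mnorm S ^ 3 = v1" and v3: "trace (W ** W) / mnorm S ^ 2 = v3"
    and v4: "trace (S ** W ** W) / mnorm S ^ 3 = v4"
    using v by (simp_all add: invs_def)
  have "((\<lambda>X. trace (X ** W ** W)) has_derivative (\<lambda>H. trace (W ** W ** H))) (at S)"
    using has_derivative_trace_mult[of "W ** W" S] by (simp add: matrix_mul_assoc)
  note d4 = quotient[OF this, of 3, unfolded v4]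
  note d3 = quotient[OF has_derivative_const[of "trace (W ** W)"], of 2, unfolded v3]
  note d1 = quotient[OF has_derivative_trace_cube, of 3, unfolded v1]
  show ?thesis
    unfolding invs_def
    by (intro has_derivative_Pair; rule has_derivative_eq_rhs[OF d1] has_derivative_eq_rhs[OF d3]
        has_derivative_eq_rhs[OF d4]) (simp_all add: fun_eq_iff power2_eq_square)
qed

lemma has_derivative_model_potential:
  assumes hg: "\<And>v. (g has_derivative g' v) (at v)" and pos: "trace (S ** S) > 0"
  shows "((\<lambda>X. model_potential g X W) has_derivative
           (\<lambda>H. trace (potential_gradient g g' S W ** H))) (at S)"
proof -
  obtain v1 v3 v4 where v: "invs S W = (v1, v3, v4)"
    by (cases "invs S W") auto
  define n where "n = mnorm S"
  have n: "0 < n" "trace (S ** S) = n ^ 2"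
    using pos by (simp_all add: n_def mnorm_def)
  define dv where "dv H = (3 * trace (S ** S ** H) / n ^ 3 - 3 * v1 * (trace (S ** H) / n ^ 2),
      - 2 * v3 * (trace (S ** H) / n ^ 2),
      trace (W ** W ** H) / n ^ 3 - 3 * v4 * (trace (S ** H) / n ^ 2))" for H
  have "((\<lambda>X. invs X W) has_derivative dv) (at S)"
    using has_derivative_invs[OF pos v] unfolding dv_def n_def .
  from has_derivative_mult[OF has_derivative_trace_square has_derivative_compose[OF this hg]]
  have D: "((\<lambda>X. model_potential g X W) has_derivative
      (\<lambda>H. trace (S ** S) * g' (v1, v3, v4) (dv H) + 2 * trace (S ** H) * g (v1, v3, v4))) (at S)"
    unfolding model_potential_def v .
  have lin: "linear (g' (v1, v3, v4))"
    using hg has_derivative_linear by blast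
  show ?thesis
  proof (rule has_derivative_eq_rhs[OF D], rule ext)
    fix H
    show "trace (S ** S) * g' (v1, v3, v4) (dv H) + 2 * trace (S ** H) * g (v1, v3, v4)
        = trace (potential_gradient g g' S W ** H)"
      unfolding linear_triple_expansion[OF lin, of "dv H"]
      unfolding potential_gradient_def Let_def v n_def[symmetric]
        matrix_add_rdistrib matrix_scaleR_left trace_add trace_scaleR n(2) dv_def fst_conv snd_conv
      using n(1) by (simp add: field_simps power2_eq_square power3_eq_cube)
  qed
qed

lemma is_dphi_dS_if_has_derivative:
  assumes "((\<lambda>X. \<phi> X W) has_derivative (\<lambda>H. trace (B ** H))) (at S)" and "sym_mat B"
  shows "is_dphi_dS \<phi> S W B"
proof -
  have "((\<lambda>H. norm (\<phi> (S + H) W - \<phi> S W - trace (B ** H)) / norm H) \<longlongrightarrow> 0) (at 0)"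
    using has_derivative_at[THEN iffD1, OF assms(1)] by (rule conjunct2)
  then have "((\<lambda>H. norm ((\<phi> (S + H) W - \<phi> S W - trace (B ** H)) / norm H)) \<longlongrightarrow> 0) (at 0)"
    by (simp add: norm_divide)
  then have "((\<lambda>H. (\<phi> (S + H) W - \<phi> S W - trace (B ** H)) / norm H) \<longlongrightarrow> 0) (at 0)"
    by (rule tendsto_norm_zero_cancel)
  then have "((\<lambda>H. (\<phi> (S + H) W - \<phi> S W - trace (B ** H)) / norm H) \<longlongrightarrow> 0) (at 0 within {H. sym_mat H})"
    by (rule tendsto_within_subset) simp
  with assms(2) show ?thesis
    unfolding is_dphi_dS_def by blast
qed

lemma model_derives_from_potential:
  assumes "\<And>v. (g has_derivative g' v) (at v)"
  shows "derives_from_potential (model g g')"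
  unfolding derives_from_potential_def
proof (intro exI[of _ "model_potential g"] allI impI)
  fix S W :: mat3
  assume S: "sym_mat S" and "trace S = 0" and "S \<noteq> 0" and W: "skew_mat W"
  have "is_dphi_dS (model_potential g) S W (potential_gradient g g' S W)"
    using has_derivative_model_potential[OF assms trace_square_pos[OF S \<open>S \<noteq> 0\<close>]]
      sym_potential_gradient[OF S W] by (rule is_dphi_dS_if_has_derivative)
  then show "\<exists>B. is_dphi_dS (model_potential g) S W B \<and> dev (model g g' S W) = dev B"
    using dev_model by blast
qed

theorem theorem3:
  fixes g :: "real \<times> real \<times> real \<Rightarrow> real"
    and g' :: "real \<times> real \<times> real \<Rightarrow> real \<times> real \<times> real \<Rightarrow> real"
    and \<nu> \<rho> :: real
  assumes "\<nu> > 0" and "\<rho> > 0"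
    and "\<And>v. (g has_derivative g' v) (at v)"
  shows "invariant_Gt \<nu> \<rho> (model g g') \<and> invariant_Gal \<nu> \<rho> (model g g')
       \<and> invariant_SO3 \<nu> \<rho> (model g g') \<and> invariant_Gp \<nu> \<rho> (model g g')
       \<and> derives_from_potential (model g g')"
proof -
  have "\<rho> \<noteq> 0"
    using assms(2) by simp
  then show ?thesis
    by (intro conjI invariant_Gt invariant_Gp invariant_Gal invariant_SO3_if_isotropic model_isotropic
        model_derives_from_potential assms(3))
qed

end
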